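(* Let $r\ge1$ and $D\ge3$ be integers, let $N:=\lfloor \frac{(D-1)r}{2}\rfloor$, $k:=\lfloor\frac{D-1}{2}\rfloor$, $\bar k:=\lceil\frac{D-1}{2}\rceil$. Let $\alpha_1<\cdots<\alpha_{r(D-1)}$ be integers with $\alpha_1\ge2$ such that $\alpha_t$ is odd for $1\le t\le N$ and $\alpha_t$ is even for $N+1\le t\le r(D-1)$. Then there is a nonzero constant $C$ such that $\tilde\Delta_{r,D}(\underline{\alpha})=C\,\tilde\Delta'_{r,D}(\underline{\alpha})\,\tilde\Delta''_{r,D}(\underline{\alpha})$. In particular, if $\tilde\Delta'_{r,D}(\underline{\alpha})\ne0$ and $\tilde\Delta''_{r,D}(\underline{\alpha})\ne0$, then $\tilde\Delta_{r,D}(\underline{\alpha})\ne0$.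
   Context: $B_n(x)$ is the Bernoulli polynomial, $\frac{ze^{xz}}{e^z-1}=\sum_{n\ge0}B_n(x)\frac{z^n}{n!}$, $B_n=B_n(0)$, and $\tilde B_n(x):=D^n(B_n(x)-B_n)$. $\tilde\Delta_{r,D}(\underline{\alpha})$ is the determinant of the $r(D-1)\times r(D-1)$ matrix whose entry in row $t$ ($1\le t\le r(D-1)$) and column $m(D-1)+v$ ($0\le m\le r-1$, $1\le v\le D-1$) is $\frac{\tilde B_{\alpha_t+m}(v/D)}{\alpha_t+m}$. $\tilde\Delta'_{r,D}(\underline{\alpha})$ is the determinant of the $N\times N$ matrix with rows indexed by $t=1,\ldots,N$ and columns indexed by the pairs $(m,v)$ with $0\le m\le r-1$ and $1\le v\le k$ if $m$ is even, $1\le v\le\bar k$ if $m$ is odd (ordered by $m$, then by $v$), with entry $\frac{\tilde B_{\alpha_t+m}(v/D)}{\alpha_t+m}$. $\tilde\Delta''_{r,D}(\underline{\alpha})$ is the determinant of the square matrix with rows indexed by $t=N+1,\ldots,r(D-1)$ and columns indexed by the pairs $(m,v)$ with $0\le m\le r-1$ and $1\le v\le\bar k$ if $m$ is even, $1\le v\le k$ if $m$ is odd (ordered by $m$, then by $v$), with entry $\frac{\tilde B_{\alpha_t+m}(v/D)}{\alpha_t+m}$. *)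

theory Defs
  imports "HOL-Computational_Algebra.Formal_Power_Series" "Jordan_Normal_Form.Determinant"
begin

definition bernoulli_gf :: "real \<Rightarrow> real fps" where
  "bernoulli_gf x = fps_X * fps_exp x / (fps_exp 1 - 1)"

definition bernpoly :: "nat \<Rightarrow> real \<Rightarrow> real" where
  "bernpoly n x = fact n * fps_nth (bernoulli_gf x) n"

definition bern_tilde :: "nat \<Rightarrow> nat \<Rightarrow> real \<Rightarrow> real" where
  "bern_tilde D n x = real D ^ n * (bernpoly n x - bernpoly n 0)"

definition delta_entry :: "nat \<Rightarrow> int \<Rightarrow> nat \<Rightarrow> nat \<Rightarrow> real" where
  "delta_entry D a m v =
     bern_tilde D (nat (a + int m)) (real v / real D) / real_of_int (a + int m)"

definition Delta_full :: "nat \<Rightarrow> nat \<Rightarrow> (nat \<Rightarrow> int) \<Rightarrow> real" where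
  "Delta_full r D \<alpha> =
     det (mat (r * (D - 1)) (r * (D - 1))
       (\<lambda>(i, j). delta_entry D (\<alpha> (i + 1)) (j div (D - 1)) (j mod (D - 1) + 1)))"

definition col_pairs :: "nat \<Rightarrow> nat \<Rightarrow> nat \<Rightarrow> (nat \<times> nat) list" where
  "col_pairs r a b = concat (map (\<lambda>m. map (\<lambda>v. (m, v)) [1..<(if even m then a else b) + 1]) [0..<r])"

definition kk :: "nat \<Rightarrow> nat" where "kk D = (D - 1) div 2"
definition kbar :: "nat \<Rightarrow> nat" where "kbar D = (D - 1 + 1) div 2"
definition NN :: "nat \<Rightarrow> nat \<Rightarrow> nat" where "NN r D = ((D - 1) * r) div 2"

definition Delta' :: "nat \<Rightarrow> nat \<Rightarrow> (nat \<Rightarrow> int) \<Rightarrow> real" where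
  "Delta' r D \<alpha> =
     (let cs = col_pairs r (kk D) (kbar D); n = NN r D in
      det (mat n n (\<lambda>(i, j). delta_entry D (\<alpha> (i + 1)) (fst (cs ! j)) (snd (cs ! j)))))"

definition Delta'' :: "nat \<Rightarrow> nat \<Rightarrow> (nat \<Rightarrow> int) \<Rightarrow> real" where
  "Delta'' r D \<alpha> =
     (let cs = col_pairs r (kbar D) (kk D); n = r * (D - 1) - NN r D in
      det (mat n n (\<lambda>(i, j). delta_entry D (\<alpha> (NN r D + i + 1)) (fst (cs ! j)) (snd (cs ! j)))))"

end

theory Submission
  imports Defs
begin

(* Since B_n(1 - x) = (-1)^n B_n(x) and B_n = 0 for odd n > 1, we have
   delta_entry D a m (D - v) = (-1)^(a + m) delta_entry D a m v as soon as a + m >= 2.  On the rows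
   with odd alpha the column (m, D - v) is therefore -(-1)^m times the column (m, v), on the rows
   with even alpha it is (-1)^m times it.  Choosing in each block one column out of every pair
   {(m, v), (m, D - v)}, plus the middle column v = D/2 whenever it does not vanish identically on
   that block, gives exactly the columns of Delta' and Delta'', and the matrix of Delta_full
   factors as diag(A', A'') T, with A' and A'' the matrices of Delta' and Delta''.  Here T has one
   row e_p + s e_(m, D - v) for every chosen column p = (m, v) of either block.  T does not depend
   on alpha, and it is nonsingular: every pair {(m, v), (m, D - v)} carries one row from each block
   with opposite signs s, and a middle column carries a row e_p. *)

section \<open>Reflection of Bernoulli polynomials\<close>

lemma bernoulli_gf_mult_denom: "bernoulli_gf x * (fps_exp 1 - 1) = fps_X * fps_exp x"
proof -
  have "subdegree (fps_exp (1::real) - 1) \<le> 1"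
    by (rule subdegree_leI) simp
  then have "(fps_exp 1 - 1) dvd fps_X * fps_exp x"
    by (simp add: fps_dvd_iff subdegree_eq_0_iff)
  then show ?thesis unfolding bernoulli_gf_def by simp
qed

lemma bernoulli_gf_unique:
  assumes "G * (fps_exp 1 - 1) = fps_X * fps_exp x"
  shows "G = bernoulli_gf x"
proof -
  have "fps_exp 1 - 1 \<noteq> (0 :: real fps)"
    by simp
  then show ?thesis
    using assms bernoulli_gf_mult_denom[of x] by (metis mult_right_cancel)
qed

lemma bernoulli_gf_compose_uminus: "bernoulli_gf x oo - fps_X = bernoulli_gf (1 - x)"
proof (rule bernoulli_gf_unique)
  let ?G = "bernoulli_gf x oo - fps_X"
  have G: "?G * (fps_exp (-1) - 1) = - fps_X * fps_exp (- x)"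
    using arg_cong[OF bernoulli_gf_mult_denom[of x], of "\<lambda>f. f oo - fps_X"]
    by (simp add: fps_compose_mult_distrib fps_compose_sub_distrib)
  have "?G * (fps_exp 1 - 1) = - (?G * (fps_exp (-1) - 1)) * fps_exp 1"
    by (simp add: algebra_simps flip: fps_exp_add_mult)
  also have "\<dots> = fps_X * (fps_exp (- x) * fps_exp 1)"
    unfolding G by simp
  also have "\<dots> = fps_X * fps_exp (1 - x)"
    by (simp flip: fps_exp_add_mult)
  finally show "?G * (fps_exp 1 - 1) = fps_X * fps_exp (1 - x)" .
qed

lemma bernpoly_reflect: "bernpoly n (1 - x) = (-1) ^ n * bernpoly n x"
  using arg_cong[OF bernoulli_gf_compose_uminus[of x], of "\<lambda>f. fps_nth f n"]
  by (simp add: bernpoly_def fps_compose_uminus')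

lemma bernoulli_gf_one: "bernoulli_gf 1 = bernoulli_gf 0 + fps_X"
proof (rule bernoulli_gf_unique[symmetric])
  show "(bernoulli_gf 0 + fps_X) * (fps_exp 1 - 1) = fps_X * fps_exp 1"
    using bernoulli_gf_mult_denom[of 0] by (simp add: algebra_simps)
qed

lemma bernpoly_one: "n \<noteq> 1 \<Longrightarrow> bernpoly n 1 = bernpoly n 0"
  by (simp add: bernpoly_def bernoulli_gf_one)

lemma bernpoly_odd_eq_0: "odd n \<Longrightarrow> n \<noteq> 1 \<Longrightarrow> bernpoly n 0 = 0"
  using bernpoly_reflect[of n 0] bernpoly_one[of n] by simp

lemma bern_tilde_reflect: "n \<noteq> 1 \<Longrightarrow> bern_tilde D n (1 - x) = (-1) ^ n * bern_tilde D n x"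
  by (cases "even n") (simp_all add: bern_tilde_def bernpoly_reflect bernpoly_odd_eq_0 algebra_simps)

lemma delta_entry_reflect:
  assumes "2 \<le> a + int m" "v \<le> D" "0 < D"
  shows "delta_entry D a m (D - v) = (if even (a + int m) then 1 else -1) * delta_entry D a m v"
proof -
  have "real (D - v) / real D = 1 - real v / real D"
    using assms(2,3) by (simp add: field_simps)
  moreover have "nat (a + int m) \<noteq> 1" "even (nat (a + int m)) \<longleftrightarrow> even (a + int m)"
    using assms(1) by (simp_all add: even_nat_iff)
  ultimately show ?thesis
    by (simp add: delta_entry_def bern_tilde_reflect)
qed

section \<open>The columns of Delta' and Delta''\<close>

lemma kk_bounds: "2 * kk D \<le> D - 1" "D - 1 \<le> 2 * kk D + 1"
  unfolding kk_def by linarith+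

lemma kbar_eq: "kbar D = D - 1 - kk D"
  unfolding kk_def kbar_def by linarith

lemma kk_reflect: "1 \<le> v \<Longrightarrow> v \<le> D - 1 \<Longrightarrow> v \<noteq> D - v \<Longrightarrow> (v \<le> kk D) \<noteq> (D - v \<le> kk D)"
  using kk_bounds[of D] by linarith

lemma kbar_reflect: "1 \<le> v \<Longrightarrow> v \<le> D - 1 \<Longrightarrow> v \<noteq> D - v \<Longrightarrow> (v \<le> kbar D) \<noteq> (D - v \<le> kbar D)"
  using kk_bounds[of D] kbar_eq[of D] by linarith

lemma midpoint_le_kbar: "v = D - v \<Longrightarrow> v \<le> kbar D"
  using kk_bounds[of D] kbar_eq[of D] by linarith

lemma midpoint_not_le_kk: "1 \<le> v \<Longrightarrow> v = D - v \<Longrightarrow> \<not> v \<le> kk D"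
  using kk_bounds[of D] by linarith

lemma col_pairs_Suc:
  "col_pairs (Suc r) a b = col_pairs r a b @ map (\<lambda>v. (r, v)) [1..<(if even r then a else b) + 1]"
  by (simp add: col_pairs_def)

lemma set_col_pairs:
  "set (col_pairs r a b) = {(m, v). m < r \<and> 1 \<le> v \<and> v \<le> (if even m then a else b)}"
proof
  show "set (col_pairs r a b) \<subseteq> {(m, v). m < r \<and> 1 \<le> v \<and> v \<le> (if even m then a else b)}"
    unfolding col_pairs_def by (auto split: if_splits)
  show "{(m, v). m < r \<and> 1 \<le> v \<and> v \<le> (if even m then a else b)} \<subseteq> set (col_pairs r a b)"
  proof clarify
    fix m v assume "m < r" "1 \<le> v" "v \<le> (if even m then a else b)"
    then show "(m, v) \<in> set (col_pairs r a b)"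
      unfolding col_pairs_def by (auto simp: image_iff intro!: bexI[of _ m])
  qed
qed

lemma distinct_col_pairs: "distinct (col_pairs r a b)"
proof (induction r)
  case 0
  show ?case by (simp add: col_pairs_def)
next
  case (Suc r)
  then show ?case by (auto simp: col_pairs_Suc set_col_pairs distinct_map inj_on_def)
qed

lemma length_col_pairs: "length (col_pairs r a b) = (r + 1) div 2 * a + r div 2 * b"
proof (induction r)
  case 0
  show ?case by (simp add: col_pairs_def)
next
  case (Suc r)
  show ?case
  proof (cases "even r")
    case True
    then obtain s where "r = 2 * s" by (auto elim: evenE)
    with Suc show ?thesis by (simp add: col_pairs_Suc)
  next
    case False
    then obtain s where "r = 2 * s + 1" by (auto elim: oddE)
    with Suc show ?thesis by (simp add: col_pairs_Suc)
  qed
qed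

text \<open>\<open>ev\<close> records whether the rows of a block have even \<open>\<alpha>\<close>; on such rows the column \<open>(m, D - v)\<close>
  is \<open>parity_sign ev m\<close> times the column \<open>(m, v)\<close>.\<close>

definition parity_sign :: "bool \<Rightarrow> nat \<Rightarrow> real" where
  "parity_sign ev m = (if even m = ev then 1 else -1)"

definition half_bound :: "nat \<Rightarrow> bool \<Rightarrow> nat \<Rightarrow> nat" where
  "half_bound D ev m = (if even m = ev then kbar D else kk D)"

definition half_cols :: "nat \<Rightarrow> nat \<Rightarrow> bool \<Rightarrow> (nat \<times> nat) list" where
  "half_cols r D ev = col_pairs r (half_bound D ev 0) (half_bound D ev 1)"

lemma half_cols_False: "half_cols r D False = col_pairs r (kk D) (kbar D)"
  and half_cols_True: "half_cols r D True = col_pairs r (kbar D) (kk D)"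
  by (simp_all add: half_cols_def half_bound_def)

lemma set_half_cols:
  "set (half_cols r D ev) = {(m, v). m < r \<and> 1 \<le> v \<and> v \<le> half_bound D ev m}"
  by (auto simp: half_cols_def set_col_pairs half_bound_def)

lemma kk_le_half_bound: "kk D \<le> half_bound D ev m"
  and half_bound_le: "half_bound D ev m \<le> D - 1"
  using kbar_eq[of D] kk_bounds[of D] by (auto simp: half_bound_def)

lemma half_bound_reflect:
  "1 \<le> v \<Longrightarrow> v \<le> D - 1 \<Longrightarrow> v \<noteq> D - v \<Longrightarrow>
     (v \<le> half_bound D ev m) \<noteq> (D - v \<le> half_bound D ev m)"
  unfolding half_bound_def using kk_reflect kbar_reflect by presburger

lemma half_bound_midpoint:
  "1 \<le> v \<Longrightarrow> v = D - v \<Longrightarrow> v \<le> half_bound D ev m \<longleftrightarrow> even m = ev"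
  unfolding half_bound_def using midpoint_le_kbar midpoint_not_le_kk by auto

lemma length_half_cols_False: "length (half_cols r D False) = NN r D"
proof -
  define k where "k = kk D"
  define e where "e = (D - 1) mod 2"
  define q where "q = r div 2"
  define t where "t = r mod 2"
  have D1: "D - 1 = 2 * k + e"
    unfolding k_def e_def kk_def by simp
  have kbar: "kbar D = k + e"
    using kbar_eq[of D] D1 k_def by simp
  have r: "r = 2 * q + t"
    unfolding q_def t_def by simp
  have r1: "(r + 1) div 2 = q + t"
    unfolding q_def t_def by presburger
  have "e \<le> 1" "t \<le> 1"
    unfolding e_def t_def by simp_all
  then have et: "e * t div 2 = 0"
    using mult_le_mono[of e 1 t 1] by simp
  have "length (half_cols r D False) = (q + t) * k + q * (k + e)"
    unfolding half_cols_False length_col_pairs r1 kbar k_def [symmetric] q_def [symmetric] ..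
  also have "\<dots> = (2 * ((2 * q + t) * k + q * e) + e * t) div 2"
    using et by (simp add: algebra_simps)
  also have "\<dots> = NN r D"
    unfolding NN_def D1 r by (simp add: algebra_simps)
  finally show ?thesis .
qed

lemma length_half_cols: "length (half_cols r D False) + length (half_cols r D True) = r * (D - 1)"
proof -
  have k: "kk D + kbar D = D - 1"
    using kbar_eq[of D] kk_bounds[of D] by linarith
  have "length (half_cols r D False) + length (half_cols r D True)
      = ((r + 1) div 2 + r div 2) * (kk D + kbar D)"
    by (simp add: half_cols_False half_cols_True length_col_pairs algebra_simps)
  also have "(r + 1) div 2 + r div 2 = r"
    by linarith
  finally show ?thesis
    unfolding k .
qed

section \<open>Column indices and the reflection \<open>v \<mapsto> D - v\<close>\<close>

definition col_set :: "nat \<Rightarrow> nat \<Rightarrow> (nat \<times> nat) set" where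
  "col_set r D = {(m, v). m < r \<and> 1 \<le> v \<and> v \<le> D - 1}"

definition col_of :: "nat \<Rightarrow> nat \<Rightarrow> nat \<times> nat" where
  "col_of D j = (j div (D - 1), j mod (D - 1) + 1)"

definition col_index :: "nat \<Rightarrow> nat \<times> nat \<Rightarrow> nat" where
  "col_index D c = fst c * (D - 1) + (snd c - 1)"

definition reflect_col :: "nat \<Rightarrow> nat \<times> nat \<Rightarrow> nat \<times> nat" where
  "reflect_col D c = (fst c, D - snd c)"

lemma col_of_in_col_set: "2 \<le> D \<Longrightarrow> j < r * (D - 1) \<Longrightarrow> col_of D j \<in> col_set r D"
  by (simp add: col_of_def col_set_def div_less_iff_less_mult Suc_le_eq)

lemma col_index_col_of: "2 \<le> D \<Longrightarrow> col_index D (col_of D j) = j"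
  by (simp add: col_of_def col_index_def div_mult_mod_eq)

lemma col_of_col_index: "c \<in> col_set r D \<Longrightarrow> col_of D (col_index D c) = c"
proof -
  assume "c \<in> col_set r D"
  then obtain m w where c: "c = (m, w + 1)" and w: "w < D - 1"
    by (auto simp: col_set_def) (metis Suc_le_D)
  then show ?thesis
    by (simp add: col_of_def col_index_def)
qed

lemma col_index_less: "c \<in> col_set r D \<Longrightarrow> col_index D c < r * (D - 1)"
proof -
  assume "c \<in> col_set r D"
  then have "fst c < r" "1 \<le> snd c" "snd c \<le> D - 1"
    by (auto simp: col_set_def)
  then have "col_index D c < (fst c + 1) * (D - 1)"
    by (simp add: col_index_def)
  also have "\<dots> \<le> r * (D - 1)"
    using \<open>fst c < r\<close> by (intro mult_right_mono) auto
  finally show ?thesis .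
qed

lemma bij_betw_col_index:
  assumes "2 \<le> D"
  shows "bij_betw (col_index D) (col_set r D) {..<r * (D - 1)}"
proof (rule bij_betw_byWitness[where f' = "col_of D"])
  show "\<forall>c\<in>col_set r D. col_of D (col_index D c) = c"
    using col_of_col_index by blast
  show "\<forall>j\<in>{..<r * (D - 1)}. col_index D (col_of D j) = j"
    using col_index_col_of assms by blast
  show "col_index D ` col_set r D \<subseteq> {..<r * (D - 1)}"
    using col_index_less by blast
  show "col_of D ` {..<r * (D - 1)} \<subseteq> col_set r D"
    using col_of_in_col_set assms by blast
qed

lemma reflect_col_in_col_set: "c \<in> col_set r D \<Longrightarrow> reflect_col D c \<in> col_set r D"
  and reflect_col_reflect_col: "c \<in> col_set r D \<Longrightarrow> reflect_col D (reflect_col D c) = c"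
  by (auto simp: col_set_def reflect_col_def)

lemma set_half_cols_subset: "set (half_cols r D ev) \<subseteq> col_set r D"
  using half_bound_le[of D ev] by (auto simp: set_half_cols col_set_def intro: order_trans)

lemma delta_entry_reflect_col:
  assumes "c \<in> col_set r D" "2 \<le> a" "even a = ev"
  shows "delta_entry D a (fst (reflect_col D c)) (snd (reflect_col D c))
    = parity_sign ev (fst c) * delta_entry D a (fst c) (snd c)"
  using assms delta_entry_reflect[of a "fst c" "snd c" D]
  by (auto simp: col_set_def reflect_col_def parity_sign_def)

section \<open>The change of basis\<close>

(* The row e_p + s e_(\<rho> p) of the change of basis, for \<rho> an involution. *)
definition sym_row :: "('a \<Rightarrow> 'a) \<Rightarrow> real \<Rightarrow> 'a \<Rightarrow> 'a \<Rightarrow> real" where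
  "sym_row \<rho> s p c = (if c = p then 1 else 0) + (if \<rho> c = p \<and> c \<noteq> p then s else 0)"

lemma sum_sym_row_mult:
  assumes "finite C" "p \<in> C" and inv: "\<And>c. c \<in> C \<Longrightarrow> \<rho> c \<in> C \<and> \<rho> (\<rho> c) = c"
  shows "(\<Sum>c\<in>C. sym_row \<rho> s p c * y c) = y p + (if \<rho> p \<noteq> p then s * y (\<rho> p) else 0)"
proof -
  have "(\<Sum>c\<in>C. sym_row \<rho> s p c * y c)
      = (\<Sum>c\<in>C. (if c = p then y c else 0) + (if c = \<rho> p \<and> \<rho> p \<noteq> p then s * y c else 0))"
    using inv assms(2) by (intro sum.cong) (auto simp: sym_row_def)
  then show ?thesis
    using assms by (simp add: sum.distrib)
qed

lemma sum_mult_sym_row: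
  assumes "finite P"
    and pair: "\<rho> c \<noteq> c \<Longrightarrow> (c \<in> P) \<noteq> (\<rho> c \<in> P)"
    and fixed: "\<rho> c = c \<Longrightarrow> c \<notin> P \<Longrightarrow> F c = 0"
    and sym: "\<rho> c \<noteq> c \<Longrightarrow> \<rho> c \<in> P \<Longrightarrow> s (\<rho> c) * F (\<rho> c) = F c"
  shows "(\<Sum>p\<in>P. F p * sym_row \<rho> (s p) p c) = F c"
proof (cases "\<rho> c = c")
  case True
  then have "(\<Sum>p\<in>P. F p * sym_row \<rho> (s p) p c) = (\<Sum>p\<in>P. if p = c then F p else 0)"
    by (intro sum.cong) (auto simp: sym_row_def)
  then show ?thesis
    using assms(1) fixed True by auto
next
  case False
  then have "(\<Sum>p\<in>P. F p * sym_row \<rho> (s p) p c)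
      = (\<Sum>p\<in>P. (if p = c then F p else 0) + (if p = \<rho> c then s p * F p else 0))"
    by (intro sum.cong) (auto simp: sym_row_def)
  also have "\<dots> = (if c \<in> P then F c else 0) + (if \<rho> c \<in> P then s (\<rho> c) * F (\<rho> c) else 0)"
    using assms(1) by (simp add: sum.distrib)
  also have "\<dots> = F c"
    using pair[OF False] sym[OF False] by auto
  finally show ?thesis .
qed

lemma sum_half_cols_sym_row:
  assumes c: "c \<in> col_set r D"
    and F_reflect: "F (reflect_col D c) = parity_sign ev (fst c) * F c"
  shows "(\<Sum>p\<in>set (half_cols r D ev). F p * sym_row (reflect_col D) (parity_sign ev (fst p)) p c) = F c"
proof (rule sum_mult_sym_row)
  obtain m v where mv: "c = (m, v)" "m < r" "1 \<le> v" "v \<le> D - 1"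
    using c by (auto simp: col_set_def)
  show "(c \<in> set (half_cols r D ev)) \<noteq> (reflect_col D c \<in> set (half_cols r D ev))"
    if "reflect_col D c \<noteq> c"
    using that mv half_bound_reflect[of v D ev m] by (auto simp: set_half_cols reflect_col_def)
  show "F c = 0" if "reflect_col D c = c" "c \<notin> set (half_cols r D ev)"
  proof -
    have "even m \<noteq> ev"
      using that mv half_bound_midpoint[of v D ev m] by (auto simp: set_half_cols reflect_col_def)
    then show ?thesis
      using F_reflect that(1) mv(1) by (simp add: parity_sign_def)
  qed
  show "parity_sign ev (fst (reflect_col D c)) * F (reflect_col D c) = F c"
    unfolding F_reflect by (simp add: reflect_col_def parity_sign_def)
qed simp

definition sym_rows :: "nat \<Rightarrow> nat \<Rightarrow> bool \<Rightarrow> real mat" where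
  "sym_rows r D ev = mat (length (half_cols r D ev)) (r * (D - 1))
     (\<lambda>(i, j). let p = half_cols r D ev ! i in
        sym_row (reflect_col D) (parity_sign ev (fst p)) p (col_of D j))"

lemma delta_rows_eq_mult_sym_rows:
  fixes r D :: nat
  assumes D: "2 \<le> D" and a: "\<And>t. t < k \<Longrightarrow> 2 \<le> a t \<and> even (a t) = ev"
  defines "cs \<equiv> half_cols r D ev"
  shows "mat k (r * (D - 1)) (\<lambda>(t, j). delta_entry D (a t) (fst (col_of D j)) (snd (col_of D j)))
    = mat k (length cs) (\<lambda>(t, i). delta_entry D (a t) (fst (cs ! i)) (snd (cs ! i)))
      * sym_rows r D ev"
    (is "?M = ?A * ?T")
proof (rule eq_matI)
  fix t j
  assume "t < dim_row (?A * ?T)" "j < dim_col (?A * ?T)"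
  then have t: "t < k" and j: "j < r * (D - 1)"
    by (simp_all add: sym_rows_def)
  define F where "F p = delta_entry D (a t) (fst p) (snd p)" for p
  define c where "c = col_of D j"
  have c: "c \<in> col_set r D"
    unfolding c_def using D j by (rule col_of_in_col_set)
  have "(?A * ?T) $$ (t, j)
      = (\<Sum>i<length cs. F (cs ! i) * sym_row (reflect_col D) (parity_sign ev (fst (cs ! i))) (cs ! i) c)"
    using t j by (simp add: sym_rows_def cs_def F_def c_def scalar_prod_def atLeast0LessThan Let_def)
  also have "\<dots> = (\<Sum>p\<in>set cs. F p * sym_row (reflect_col D) (parity_sign ev (fst p)) p c)"
    using sum.reindex_bij_betw[OF bij_betw_nth[OF distinct_col_pairs refl refl]]
    by (simp add: cs_def half_cols_def)
  also have "\<dots> = F c"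
    unfolding cs_def using c delta_entry_reflect_col[OF c] a[OF t]
    by (intro sum_half_cols_sym_row) (simp_all add: F_def)
  finally show "?M $$ (t, j) = (?A * ?T) $$ (t, j)"
    using t j by (simp add: F_def c_def)
qed (simp_all add: sym_rows_def)

lemma sym_rows_carrier: "sym_rows r D ev \<in> carrier_mat (length (half_cols r D ev)) (r * (D - 1))"
  by (simp add: sym_rows_def)

lemma sym_rows_mult_vec:
  assumes D: "2 \<le> D" and x: "x \<in> carrier_vec (r * (D - 1))"
    and i: "i < length (half_cols r D ev)"
  defines "p \<equiv> half_cols r D ev ! i"
  shows "(sym_rows r D ev *\<^sub>v x) $ i = x $ col_index D p +
    (if reflect_col D p \<noteq> p then parity_sign ev (fst p) * x $ col_index D (reflect_col D p) else 0)"
proof -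
  let ?s = "parity_sign ev (fst p)"
  have bij: "bij_betw (col_index D) (col_set r D) {..<r * (D - 1)}"
    using D by (rule bij_betw_col_index)
  have p: "p \<in> col_set r D"
    using set_half_cols_subset i unfolding p_def by (meson nth_mem subsetD)
  have "(sym_rows r D ev *\<^sub>v x) $ i
      = (\<Sum>j<r * (D - 1). sym_row (reflect_col D) ?s p (col_of D j) * x $ j)"
    using i x by (simp add: sym_rows_def p_def scalar_prod_def atLeast0LessThan Let_def)
  also have "\<dots> = (\<Sum>c\<in>col_set r D. sym_row (reflect_col D) ?s p c * x $ col_index D c)"
    using sum.reindex_bij_betw[OF bij, of "\<lambda>j. sym_row (reflect_col D) ?s p (col_of D j) * x $ j"]
    by (simp add: col_of_col_index)
  also have "\<dots> = x $ col_index D p +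
      (if reflect_col D p \<noteq> p then ?s * x $ col_index D (reflect_col D p) else 0)"
    using bij_betw_finite[OF bij] p reflect_col_in_col_set reflect_col_reflect_col
    by (intro sum_sym_row_mult) auto
  finally show ?thesis .
qed

definition sym_mat :: "nat \<Rightarrow> nat \<Rightarrow> real mat" where
  "sym_mat r D = sym_rows r D False @\<^sub>r sym_rows r D True"

lemma sym_mat_carrier: "sym_mat r D \<in> carrier_mat (r * (D - 1)) (r * (D - 1))"
  using length_half_cols[of r D] sym_rows_carrier[of r D]
  by (metis carrier_append_rows sym_mat_def)

lemma sym_mat_kernel_row:
  assumes D: "2 \<le> D" and x: "x \<in> carrier_vec (r * (D - 1))"
    and kernel: "sym_mat r D *\<^sub>v x = 0\<^sub>v (r * (D - 1))"
    and p: "p \<in> set (half_cols r D ev)"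
  shows "x $ col_index D p +
    (if reflect_col D p \<noteq> p then parity_sign ev (fst p) * x $ col_index D (reflect_col D p) else 0) = 0"
proof -
  let ?n = "r * (D - 1)"
  let ?n1 = "length (half_cols r D False)"
  obtain i where i: "i < length (half_cols r D ev)" "p = half_cols r D ev ! i"
    using p by (auto simp: in_set_conv_nth)
  have split: "sym_mat r D *\<^sub>v x = (sym_rows r D False *\<^sub>v x) @\<^sub>v (sym_rows r D True *\<^sub>v x)"
    unfolding sym_mat_def using x sym_rows_carrier by (intro mat_mult_append) auto
  have "(sym_rows r D ev *\<^sub>v x) $ i = (sym_mat r D *\<^sub>v x) $ (if ev then ?n1 + i else i)"
    unfolding split using i by (cases ev) (auto simp: sym_rows_def)
  also have "\<dots> = 0"
    unfolding kernel using i length_half_cols[of r D] by (cases ev) auto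
  finally show ?thesis
    unfolding i(2) sym_rows_mult_vec[OF D x i(1)] .
qed

lemma sym_mat_kernel_col_zero:
  assumes D: "2 \<le> D" and x: "x \<in> carrier_vec (r * (D - 1))"
    and kernel: "sym_mat r D *\<^sub>v x = 0\<^sub>v (r * (D - 1))"
    and c: "c \<in> col_set r D"
  shows "x $ col_index D c = 0"
proof -
  let ?\<rho> = "reflect_col D"
  define y where "y c = x $ col_index D c" for c
  have row: "y p + (if ?\<rho> p \<noteq> p then parity_sign ev (fst p) * y (?\<rho> p) else 0) = 0"
    if "p \<in> set (half_cols r D ev)" for p ev
    using sym_mat_kernel_row[OF D x kernel that] unfolding y_def .
  have low: "y c = 0 \<and> y (?\<rho> c) = 0" if c: "c \<in> col_set r D" "snd c \<le> kk D" for c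
  proof -
    have "?\<rho> c \<noteq> c"
      using c midpoint_not_le_kk[of "snd c" D] by (auto simp: col_set_def reflect_col_def prod_eq_iff)
    moreover have "c \<in> set (half_cols r D ev)" for ev
      using c kk_le_half_bound[of D ev "fst c"] by (auto simp: set_half_cols col_set_def)
    ultimately have "y c + parity_sign ev (fst c) * y (?\<rho> c) = 0" for ev
      using row[of c ev] by simp
    from this[of True] this[of False] show ?thesis
      by (cases "even (fst c)") (auto simp: parity_sign_def)
  qed
  show ?thesis
    unfolding y_def [symmetric]
  proof (cases "snd c \<le> kk D \<or> snd (?\<rho> c) \<le> kk D")
    case True
    then show "y c = 0"
    proof
      assume "snd c \<le> kk D"
      then show ?thesis using low c by blast
    next
      assume "snd (?\<rho> c) \<le> kk D"
      then have "y (?\<rho> (?\<rho> c)) = 0"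
        using low reflect_col_in_col_set[OF c] by blast
      then show ?thesis
        unfolding reflect_col_reflect_col[OF c] .
    qed
  next
    case False
    then have "snd c = D - snd c"
      using c kk_reflect[of "snd c" D]
      by (cases "snd c = D - snd c") (auto simp: col_set_def reflect_col_def)
    then have mid: "?\<rho> c = c"
      by (simp add: reflect_col_def prod_eq_iff)
    then have "c \<in> set (half_cols r D (even (fst c)))"
      using c half_bound_midpoint[of "snd c" D "even (fst c)" "fst c"]
      by (auto simp: set_half_cols col_set_def reflect_col_def prod_eq_iff)
    then show "y c = 0"
      using row mid by fastforce
  qed
qed

lemma det_sym_mat_nonzero:
  assumes D: "2 \<le> D"
  shows "det (sym_mat r D) \<noteq> 0"
proof
  let ?n = "r * (D - 1)"
  assume "det (sym_mat r D) = 0"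
  then obtain x where x: "x \<in> carrier_vec ?n" "x \<noteq> 0\<^sub>v ?n" "sym_mat r D *\<^sub>v x = 0\<^sub>v ?n"
    using det_0_iff_vec_prod_zero[OF sym_mat_carrier] by blast
  have "x $ j = 0" if "j < ?n" for j
    using sym_mat_kernel_col_zero[OF D x(1) x(3) col_of_in_col_set[OF D that]]
    unfolding col_index_col_of[OF D] .
  then have "x = 0\<^sub>v ?n"
    using x(1) by (intro eq_vecI) auto
  with x(2) show False ..
qed

section \<open>The factorization\<close>

lemma mat_eq_append_rows:
  assumes "k \<le> n"
  shows "mat n m f = mat k m f @\<^sub>r mat (n - k) m (\<lambda>(i, j). f (k + i, j))"
  using assms by (intro eq_matI) (auto simp: append_rows_def)

lemma four_block_diag_mult_append_rows:
  assumes "A1 \<in> carrier_mat n1 n1" "A2 \<in> carrier_mat n2 n2"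
    and "T1 \<in> carrier_mat n1 nc" "T2 \<in> carrier_mat n2 nc"
  shows "four_block_mat A1 (0\<^sub>m n1 n2) (0\<^sub>m n2 n1) A2 * (T1 @\<^sub>r T2) = (A1 * T1) @\<^sub>r (A2 * T2)"
  using assms unfolding append_rows_def
  by (subst mult_four_block_mat[of _ n1 n1 _ n2 _ n2 _ _ nc _ 0]) auto

lemma Delta_full_eq_det_sym_mat_mult:
  fixes r D :: nat and \<alpha> :: "nat \<Rightarrow> int"
  assumes D: "2 \<le> D"
    and ge2: "\<And>t. 1 \<le> t \<Longrightarrow> t \<le> r * (D - 1) \<Longrightarrow> 2 \<le> \<alpha> t"
    and odd: "\<And>t. 1 \<le> t \<Longrightarrow> t \<le> NN r D \<Longrightarrow> odd (\<alpha> t)"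
    and even: "\<And>t. NN r D + 1 \<le> t \<Longrightarrow> t \<le> r * (D - 1) \<Longrightarrow> even (\<alpha> t)"
  shows "Delta_full r D \<alpha> = det (sym_mat r D) * Delta' r D \<alpha> * Delta'' r D \<alpha>"
proof -
  define n where "n = r * (D - 1)"
  define N where "N = NN r D"
  define cs1 where "cs1 = half_cols r D False"
  define cs2 where "cs2 = half_cols r D True"
  have len: "length cs1 = N" "length cs2 = n - N" and "N \<le> n"
    using length_half_cols_False[of r D] length_half_cols[of r D]
    unfolding cs1_def cs2_def N_def n_def by linarith+
  define F where "F = (\<lambda>(t, j). delta_entry D (\<alpha> (t + 1)) (fst (col_of D j)) (snd (col_of D j)))"
  define A1 where
    "A1 = mat N N (\<lambda>(t, i). delta_entry D (\<alpha> (t + 1)) (fst (cs1 ! i)) (snd (cs1 ! i)))"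
  define A2 where
    "A2 = mat (n - N) (n - N) (\<lambda>(t, i). delta_entry D (\<alpha> (N + t + 1)) (fst (cs2 ! i)) (snd (cs2 ! i)))"
  have A1: "A1 \<in> carrier_mat N N" and A2: "A2 \<in> carrier_mat (n - N) (n - N)"
    by (simp_all add: A1_def A2_def)
  have T1: "sym_rows r D False \<in> carrier_mat N n" and T2: "sym_rows r D True \<in> carrier_mat (n - N) n"
    using sym_rows_carrier[of r D False] sym_rows_carrier[of r D True] len
    unfolding cs1_def cs2_def n_def by simp_all
  have rows1: "2 \<le> \<alpha> (t + 1) \<and> even (\<alpha> (t + 1)) = False" if "t < N" for t
    using ge2[of "t + 1"] odd[of "t + 1"] that \<open>N \<le> n\<close> unfolding N_def n_def by auto
  have rows2: "2 \<le> \<alpha> (N + t + 1) \<and> even (\<alpha> (N + t + 1)) = True" if "t < n - N" for t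
    using ge2[of "N + t + 1"] even[of "N + t + 1"] that unfolding N_def n_def by auto
  have "Delta_full r D \<alpha> = det (mat n n F)"
    unfolding Delta_full_def F_def n_def col_of_def by simp
  also have "mat n n F = mat N n F @\<^sub>r mat (n - N) n (\<lambda>(t, j). F (N + t, j))"
    using \<open>N \<le> n\<close> by (rule mat_eq_append_rows)
  also have "mat N n F = A1 * sym_rows r D False"
    using delta_rows_eq_mult_sym_rows[OF D rows1] len(1)
    by (simp add: F_def A1_def cs1_def n_def)
  also have "mat (n - N) n (\<lambda>(t, j). F (N + t, j)) = A2 * sym_rows r D True"
    using delta_rows_eq_mult_sym_rows[OF D rows2] len(2)
    by (simp add: F_def A2_def cs2_def n_def)
  also have "(A1 * sym_rows r D False) @\<^sub>r (A2 * sym_rows r D True)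
      = four_block_mat A1 (0\<^sub>m N (n - N)) (0\<^sub>m (n - N) N) A2 * sym_mat r D"
    unfolding sym_mat_def using A1 A2 T1 T2 by (rule four_block_diag_mult_append_rows[symmetric])
  also have "det \<dots> = det (four_block_mat A1 (0\<^sub>m N (n - N)) (0\<^sub>m (n - N) N) A2) * det (sym_mat r D)"
    using A1 A2 sym_mat_carrier[of r D] \<open>N \<le> n\<close> unfolding n_def
    by (intro det_mult) auto
  also have "det (four_block_mat A1 (0\<^sub>m N (n - N)) (0\<^sub>m (n - N) N) A2) = det A1 * det A2"
    using A1 A2 by (intro det_four_block_mat_lower_left_zero) auto
  also have "det A1 = Delta' r D \<alpha>"
    unfolding Delta'_def A1_def cs1_def N_def half_cols_False Let_def ..
  also have "det A2 = Delta'' r D \<alpha>"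
    unfolding Delta''_def A2_def cs2_def N_def n_def half_cols_True Let_def ..
  finally show ?thesis
    by simp
qed

theorem proposition3p4:
  fixes r D :: nat
  assumes "r \<ge> 1" and "D \<ge> 3"
  shows "\<exists>C::real. C \<noteq> 0 \<and>
    (\<forall>\<alpha> :: nat \<Rightarrow> int.
       (\<forall>s t. 1 \<le> s \<and> s < t \<and> t \<le> r * (D - 1) \<longrightarrow> \<alpha> s < \<alpha> t) \<and>
       \<alpha> 1 \<ge> 2 \<and>
       (\<forall>t. 1 \<le> t \<and> t \<le> NN r D \<longrightarrow> odd (\<alpha> t)) \<and>
       (\<forall>t. NN r D + 1 \<le> t \<and> t \<le> r * (D - 1) \<longrightarrow> even (\<alpha> t))
       \<longrightarrow> Delta_full r D \<alpha> = C * Delta' r D \<alpha> * Delta'' r D \<alpha> \<and>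
           (Delta' r D \<alpha> \<noteq> 0 \<and> Delta'' r D \<alpha> \<noteq> 0 \<longrightarrow> Delta_full r D \<alpha> \<noteq> 0))"
proof (intro exI[of _ "det (sym_mat r D)"] conjI allI impI)
  show C: "det (sym_mat r D) \<noteq> 0"
    using assms(2) by (intro det_sym_mat_nonzero) simp
  fix \<alpha> :: "nat \<Rightarrow> int"
  assume hyps: "(\<forall>s t. 1 \<le> s \<and> s < t \<and> t \<le> r * (D - 1) \<longrightarrow> \<alpha> s < \<alpha> t) \<and>
       \<alpha> 1 \<ge> 2 \<and>
       (\<forall>t. 1 \<le> t \<and> t \<le> NN r D \<longrightarrow> odd (\<alpha> t)) \<and>
       (\<forall>t. NN r D + 1 \<le> t \<and> t \<le> r * (D - 1) \<longrightarrow> even (\<alpha> t))"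
  have "2 \<le> \<alpha> t" if "1 \<le> t" "t \<le> r * (D - 1)" for t
  proof (cases "t = 1")
    case False
    with hyps that have "\<alpha> 1 < \<alpha> t"
      by simp
    with hyps show ?thesis
      by simp
  qed (use hyps in simp)
  with hyps show eq: "Delta_full r D \<alpha> = det (sym_mat r D) * Delta' r D \<alpha> * Delta'' r D \<alpha>"
    using assms(2) by (intro Delta_full_eq_det_sym_mat_mult) auto
  assume "Delta' r D \<alpha> \<noteq> 0 \<and> Delta'' r D \<alpha> \<noteq> 0"
  with C show "Delta_full r D \<alpha> \<noteq> 0"
    unfolding eq by simp
qed

end
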